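(* Let $m>2$ be an odd integer, $n\ge 1$ an integer, and let $M_{2mn}=\langle a,b : a^m=b^{2n}=1,\ bab^{-1}=a^{-1}\rangle$ be the metacyclic group of order $2mn$. Let $\Gamma_{M_{2mn}}$ be its non-commuting graph. Then the spectrum of the distance Laplacian matrix $D^L(\Gamma_{M_{2mn}})$ (eigenvalues counted with multiplicity, multiplicities being added if two of the listed values coincide) consists of: (a) $0$ with multiplicity $1$; (b) $n(2m-1)$ with multiplicity $m$; (c) $2mn$ with multiplicity $m(n-1)$; (d) $(3m-2)n$ with multiplicity $(m-1)n-1$.
   Context: For a finite non-abelian group $G$ with centre $Z(G)$, the non-commuting graph $\Gamma_G$ is the simple undirected graph with vertex set $G\setminus Z(G)$, in which two distinct vertices $u,v$ are adjacent if and only if $uv\ne vu$. For a connected graph $H$, $d_{uv}$ denotes the length of a shortest path between $u$ and $v$; the distance matrix $D(H)$ has $(u,v)$-entry $d_{uv}$. The transmission of a vertex $v$ is $\sum_{u} d_{uv}$, and $Tr(H)$ is the diagonal matrix of vertex transmissions. The distance Laplacian matrix is $D^L(H)=Tr(H)-D(H)$. *)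

theory Defs
  imports "HOL-Algebra.Generated_Groups" "Jordan_Normal_Form.Determinant"
    "Jordan_Normal_Form.Char_Poly"
begin

definition group_centre :: "('a, 'b) monoid_scheme \<Rightarrow> 'a set" where
  "group_centre G = {z \<in> carrier G. \<forall>g \<in> carrier G. z \<otimes>\<^bsub>G\<^esub> g = g \<otimes>\<^bsub>G\<^esub> z}"

definition nc_vertices :: "('a, 'b) monoid_scheme \<Rightarrow> 'a set" where
  "nc_vertices G = carrier G - group_centre G"

definition nc_adj :: "('a, 'b) monoid_scheme \<Rightarrow> 'a \<Rightarrow> 'a \<Rightarrow> bool" where
  "nc_adj G u v \<longleftrightarrow> u \<in> nc_vertices G \<and> v \<in> nc_vertices G \<and> u \<noteq> v
     \<and> u \<otimes>\<^bsub>G\<^esub> v \<noteq> v \<otimes>\<^bsub>G\<^esub> u"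

fun walk_of_len :: "('a \<Rightarrow> 'a \<Rightarrow> bool) \<Rightarrow> nat \<Rightarrow> 'a \<Rightarrow> 'a \<Rightarrow> bool" where
  "walk_of_len E 0 u v = (u = v)"
| "walk_of_len E (Suc k) u v = (\<exists>w. E u w \<and> walk_of_len E k w v)"

text \<open>Graph distance: length of a shortest path (the graph is assumed connected).\<close>
definition graph_dist :: "('a \<Rightarrow> 'a \<Rightarrow> bool) \<Rightarrow> 'a \<Rightarrow> 'a \<Rightarrow> nat" where
  "graph_dist E u v = (LEAST k. walk_of_len E k u v)"

definition dist_laplacian :: "'a set \<Rightarrow> ('a \<Rightarrow> 'a \<Rightarrow> bool) \<Rightarrow> 'a \<Rightarrow> 'a \<Rightarrow> real" where
  "dist_laplacian V E u v =
     (if u = v then (\<Sum>w\<in>V. real (graph_dist E u w)) else 0) - real (graph_dist E u v)"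

definition dist_laplacian_mat :: "'a set \<Rightarrow> ('a \<Rightarrow> 'a \<Rightarrow> bool) \<Rightarrow> (nat \<Rightarrow> 'a) \<Rightarrow> real mat" where
  "dist_laplacian_mat V E e = mat (card V) (card V) (\<lambda>(i, j). dist_laplacian V E (e i) (e j))"

end

(*
  The non-commuting graph of M_2mn is complete multipartite. Writing every element uniquely as
  a^i b^j (i < m, j < 2n), the relation b a^k = a^(-k) b shows that a^i b^j and a^k b^l commute
  iff 2 (if l odd then i else 0) = 2 (if j odd then k else 0) mod m; as m is odd, the centre is
  {b^j : j even}, and two non-central elements commute iff they lie in the same part, the parts
  being {a^i b^j : i <> 0, j even} (of size (m - 1) n) and {a^i b^j : j odd} for each i < m
  (of size n each).

  In a complete multipartite graph with at least two parts, distances are 1 between parts and 2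
  inside a part, so the distance Laplacian on N vertices is diag(N + p(u)) - J - B, where p(u) is
  the size of the part of u and B the 0/1 matrix of lying in the same part. It is diagonalised
  explicitly: the all-ones vector has eigenvalue 0, the differences of normalised part indicators
  give eigenvalue N with multiplicity (#parts - 1), and differences of unit vectors inside a part
  of size p give eigenvalue N + p with multiplicity p - 1. With N = (2m - 1) n and m + 1 parts
  this is the stated spectrum.
*)
theory Submission
  imports Defs
begin

section \<open>Distance Laplacians of complete multipartite graphs\<close>

lemma graph_dist_refl: "graph_dist E u u = 0"
  unfolding graph_dist_def by (rule Least_eq_0) simp

lemma graph_dist_eq_1:
  assumes "E u v" and "u \<noteq> v"
  shows "graph_dist E u v = 1"
  unfolding graph_dist_def
proof (rule Least_equality)
  show "walk_of_len E 1 u v" using assms by simp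
  show "1 \<le> k" if "walk_of_len E k u v" for k
    using that assms by (cases k) auto
qed

lemma graph_dist_eq_2:
  assumes "u \<noteq> v" and "\<not> E u v" and "E u w" and "E w v"
  shows "graph_dist E u v = 2"
  unfolding graph_dist_def
proof (rule Least_equality)
  show "walk_of_len E 2 u v" using assms by (auto simp: numeral_2_eq_2)
  show "2 \<le> k" if "walk_of_len E k u v" for k
  proof (rule ccontr)
    assume "\<not> 2 \<le> k"
    then have "k = 0 \<or> k = 1" by linarith
    then show False using that assms(1,2) by auto
  qed
qed

lemma char_poly_eq_prod_if_diagonalised:
  fixes M P Q :: "'b::field mat" and d :: "nat \<Rightarrow> 'b"
  assumes carrier: "M \<in> carrier_mat N N" "P \<in> carrier_mat N N" "Q \<in> carrier_mat N N"
    and QP: "Q * P = 1\<^sub>m N"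
    and MP: "M * P = P * mat N N (\<lambda>(i, j). if i = j then d i else 0)"
  shows "char_poly M = (\<Prod>i<N. [:- d i, 1:])"
proof -
  define T where "T = mat N N (\<lambda>(i, j). if i = j then d i else 0)"
  have T: "T \<in> carrier_mat N N"
    by (simp add: T_def)
  have PQ: "P * Q = 1\<^sub>m N"
    using mat_mult_left_right_inverse carrier QP by blast
  have "M = P * T * Q"
    using carrier by (metis MP[folded T_def] PQ assoc_mult_mat right_mult_one_mat)
  then have "similar_mat M T"
    unfolding similar_mat_def using similar_mat_witI[OF PQ QP _ carrier(1) T carrier(2,3)] by blast
  then have "char_poly M = char_poly T"
    by (rule char_poly_similar)
  also have "\<dots> = (\<Prod>x\<leftarrow>diag_mat T. [:- x, 1:])"
    by (rule char_poly_upper_triangular[OF T]) (auto simp: T_def upper_triangular_def)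
  also have "\<dots> = (\<Prod>i<N. [:- d i, 1:])"
    by (simp add: diag_mat_def T_def prod.distinct_set_conv_list[symmetric] atLeast0LessThan)
  finally show ?thesis .
qed

lemma char_poly_eq_prod_of_eigenbasis:
  fixes A x y :: "'a \<Rightarrow> 'a \<Rightarrow> 'b::field" and \<mu> :: "'a \<Rightarrow> 'b"
  assumes e: "bij_betw e {..<N} V"
    and eigen: "\<And>t u. t \<in> V \<Longrightarrow> u \<in> V \<Longrightarrow> (\<Sum>w\<in>V. A u w * x t w) = \<mu> t * x t u"
    and dual: "\<And>s t. s \<in> V \<Longrightarrow> t \<in> V \<Longrightarrow> (\<Sum>w\<in>V. y s w * x t w) = of_bool (s = t)"
  shows "char_poly (mat N N (\<lambda>(i, j). A (e i) (e j))) = (\<Prod>u\<in>V. [:- \<mu> u, 1:])"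
proof -
  have e_in: "e i \<in> V" if "i < N" for i
    using e that by (auto simp: bij_betw_def)
  have e_eq_iff: "e i = e j \<longleftrightarrow> i = j" if "i < N" "j < N" for i j
    using e that by (auto simp: bij_betw_def inj_on_def)
  have sum_e: "(\<Sum>k<N. f (e k)) = (\<Sum>w\<in>V. f w)" for f :: "'a \<Rightarrow> 'b"
    using sum.reindex_bij_betw[OF e] .
  define P where "P = mat N N (\<lambda>(i, j). x (e j) (e i))"
  define Q where "Q = mat N N (\<lambda>(i, j). y (e i) (e j))"
  have "char_poly (mat N N (\<lambda>(i, j). A (e i) (e j))) = (\<Prod>i<N. [:- \<mu> (e i), 1:])"
  proof (rule char_poly_eq_prod_if_diagonalised[where P = P and Q = Q])
    show "mat N N (\<lambda>(i, j). A (e i) (e j)) * P = P * mat N N (\<lambda>(i, j). if i = j then \<mu> (e i) else 0)"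
    proof (rule eq_matI)
      fix i j assume "i < dim_row (P * mat N N (\<lambda>(i, j). if i = j then \<mu> (e i) else 0))"
        and "j < dim_col (P * mat N N (\<lambda>(i, j). if i = j then \<mu> (e i) else 0))"
      then have i: "i < N" and j: "j < N" by (auto simp: P_def)
      have "(\<Sum>k<N. A (e i) (e k) * x (e j) (e k)) = \<mu> (e j) * x (e j) (e i)"
        using sum_e[of "\<lambda>w. A (e i) w * x (e j) w"] eigen[OF e_in[OF j] e_in[OF i]] by simp
      also have "\<dots> = (\<Sum>k<N. x (e k) (e i) * (if k = j then \<mu> (e k) else 0))"
        using j by (simp add: if_distrib[where f = "\<lambda>z. _ * z"] cong: if_cong)
      finally show "(mat N N (\<lambda>(i, j). A (e i) (e j)) * P) $$ (i, j)
          = (P * mat N N (\<lambda>(i, j). if i = j then \<mu> (e i) else 0)) $$ (i, j)"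
        using i j by (simp add: P_def scalar_prod_def lessThan_atLeast0)
    qed (auto simp: P_def)
    show "Q * P = 1\<^sub>m N"
    proof (rule eq_matI)
      fix i j assume "i < dim_row (1\<^sub>m N :: 'b mat)" "j < dim_col (1\<^sub>m N :: 'b mat)"
      then have i: "i < N" and j: "j < N" by auto
      have "(\<Sum>k<N. y (e i) (e k) * x (e j) (e k)) = of_bool (e i = e j)"
        using sum_e[of "\<lambda>w. y (e i) w * x (e j) w"] dual[OF e_in[OF i] e_in[OF j]] by simp
      then show "(Q * P) $$ (i, j) = 1\<^sub>m N $$ (i, j)"
        using e_eq_iff[OF i j] i j by (simp add: Q_def P_def scalar_prod_def lessThan_atLeast0)
    qed (auto simp: Q_def P_def)
  qed (auto simp: P_def Q_def)
  also have "\<dots> = (\<Prod>u\<in>V. [:- \<mu> u, 1:])"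
    using prod.reindex_bij_betw[OF e] .
  finally show ?thesis .
qed

locale complete_multipartite =
  fixes V :: "'a set" and part_of :: "'a \<Rightarrow> 'k" and E :: "'a \<Rightarrow> 'a \<Rightarrow> bool"
  assumes finite_V: "finite V"
    and adj_iff: "E u v \<longleftrightarrow> u \<in> V \<and> v \<in> V \<and> part_of u \<noteq> part_of v"
    and two_le_card_parts: "2 \<le> card (part_of ` V)"
begin

definition part :: "'k \<Rightarrow> 'a set" where
  "part k = {u \<in> V. part_of u = k}"

lemma V_Int_part_of_eq: "V \<inter> {w. part_of w = k} = part k"
  by (auto simp: part_def)

lemma sum_of_bool_part_of_mult:
  fixes f :: "'a \<Rightarrow> real"
  shows "(\<Sum>w\<in>V. of_bool (part_of w = k) * f w) = (\<Sum>w\<in>part k. f w)"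
  using finite_V by (simp add: V_Int_part_of_eq)

lemma finite_part: "finite (part k)"
  using finite_V by (simp add: part_def)

lemma card_part_pos: "u \<in> V \<Longrightarrow> 0 < card (part (part_of u))"
  using finite_part card_gt_0_iff by (fastforce simp: part_def)

lemma exists_other_part:
  assumes "u \<in> V"
  obtains w where "w \<in> V" and "part_of w \<noteq> part_of u"
proof -
  have "\<not> part_of ` V \<subseteq> {part_of u}"
    using two_le_card_parts card_mono[of "{part_of u}" "part_of ` V"] by auto
  then show ?thesis using that by auto
qed

lemma graph_dist_eq:
  assumes "u \<in> V" and "v \<in> V"
  shows "graph_dist E u v = (if u = v then 0 else if part_of u = part_of v then 2 else 1)"
proof -
  consider "u = v" | "u \<noteq> v" "part_of u = part_of v" | "part_of u \<noteq> part_of v"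
    by blast
  then show ?thesis
  proof cases
    case 1
    then show ?thesis by (simp add: graph_dist_refl)
  next
    case 2
    obtain w where "w \<in> V" and "part_of w \<noteq> part_of u"
      using exists_other_part[OF assms(1)] .
    then have "graph_dist E u v = 2"
      using 2 assms by (intro graph_dist_eq_2[where w = w]) (auto simp: adj_iff)
    then show ?thesis using 2 by simp
  next
    case 3
    then show ?thesis using assms by (auto simp: adj_iff graph_dist_eq_1)
  qed
qed

lemma transmission_eq:
  assumes "u \<in> V"
  shows "(\<Sum>w\<in>V. real (graph_dist E u w)) = real (card V) + real (card (part (part_of u))) - 2"
proof -
  have "(\<Sum>w\<in>V. real (graph_dist E u w))
      = (\<Sum>w\<in>V. 1 + of_bool (part_of u = part_of w) - 2 * of_bool (u = w))"
    by (rule sum.cong) (auto simp: graph_dist_eq assms)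
  also have "\<dots> = real (card V) + real (card (part (part_of u))) - 2"
  proof -
    have "V \<inter> {w. u = w} = {u}" using assms by auto
    then show ?thesis
      using finite_V
      by (simp add: sum.distrib sum_subtractf sum_distrib_left[symmetric] eq_commute[of "part_of u"]
          V_Int_part_of_eq)
  qed
  finally show ?thesis .
qed

lemma dist_laplacian_eq:
  assumes "u \<in> V" and "v \<in> V"
  shows "dist_laplacian V E u v
    = of_bool (u = v) * real (card V + card (part (part_of u))) - 1 - of_bool (part_of u = part_of v)"
  using assms transmission_eq[OF assms(1)] graph_dist_eq[OF assms]
  by (auto simp: dist_laplacian_def)

definition rep :: "'k \<Rightarrow> 'a" where
  "rep k = (SOME u. u \<in> part k)"

definition root_part :: 'k where
  "root_part = part_of (SOME u. u \<in> V)"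

abbreviation root :: 'a where
  "root \<equiv> rep root_part"

lemma rep_in_V: "u \<in> V \<Longrightarrow> rep (part_of u) \<in> V"
  and part_of_rep: "u \<in> V \<Longrightarrow> part_of (rep (part_of u)) = part_of u"
  using someI[of "\<lambda>w. w \<in> part (part_of u)" u] by (auto simp: rep_def part_def)

lemma V_nonempty: "V \<noteq> {}"
  using two_le_card_parts by auto

lemma root_in_V: "root \<in> V"
  and part_of_root: "part_of root = root_part"
  using rep_in_V[of "SOME u. u \<in> V"] part_of_rep[of "SOME u. u \<in> V"] some_in_eq V_nonempty
  by (auto simp: root_part_def)

lemma vertex_cases:
  obtains "t = root"
  | "t \<noteq> root" and "t = rep (part_of t)"
  | "t \<noteq> root" and "t \<noteq> rep (part_of t)"
  by blast

text \<open>The eigenbasis is indexed by the vertices: \<open>root\<close> stands for the all-ones vector, every other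
  representative for the difference of the normalised indicators of its part and of the root part,
  and every remaining vertex \<open>t\<close> for the difference of the unit vectors at \<open>t\<close> and at the
  representative of its part. \<open>dualvec\<close> gives the rows of the inverse matrix.\<close>

definition eigvec :: "'a \<Rightarrow> 'a \<Rightarrow> real" where
  "eigvec t w =
    (if t = root then 1
     else if t = rep (part_of t) then
       of_bool (part_of w = part_of t) / card (part (part_of t))
       - of_bool (part_of w = root_part) / card (part root_part)
     else of_bool (w = t) - of_bool (w = rep (part_of t)))"

definition dualvec :: "'a \<Rightarrow> 'a \<Rightarrow> real" where
  "dualvec t w =
    (if t = root then 1 / card V
     else if t = rep (part_of t) then of_bool (part_of w = part_of t) - card (part (part_of t)) / card V
     else of_bool (w = t) - of_bool (part_of w = part_of t) / card (part (part_of t)))"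

definition eigval :: "'a \<Rightarrow> real" where
  "eigval t =
    (if t = root then 0
     else if t = rep (part_of t) then card V
     else card V + card (part (part_of t)))"

lemma sum_part_of_bool_part_of:
  "(\<Sum>w\<in>part k. of_bool (part_of w = j)) = of_bool (k = j) * real (card (part k))"
  by (auto simp: part_def)

lemma sum_part_eigvec:
  assumes "t \<in> V"
  shows "(\<Sum>w\<in>part k. eigvec t w) =
    (if t = root then real (card (part k))
     else if t = rep (part_of t) then of_bool (k = part_of t) - of_bool (k = root_part)
     else 0)"
proof (cases t rule: vertex_cases)
  case 1
  then show ?thesis by (simp add: eigvec_def)
next
  case 2
  have "(\<Sum>w\<in>part k. eigvec t w)
      = (\<Sum>w\<in>part k. of_bool (part_of w = part_of t)) / card (part (part_of t))
        - (\<Sum>w\<in>part k. of_bool (part_of w = root_part)) / card (part root_part)"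
    using 2 by (simp add: eigvec_def sum_subtractf sum_divide_distrib)
  also have "\<dots> = of_bool (k = part_of t) - of_bool (k = root_part)"
    using card_part_pos[OF assms] card_part_pos[OF root_in_V]
    by (simp add: sum_part_of_bool_part_of part_of_root)
  finally show ?thesis unfolding if_not_P[OF 2(1)] if_P[OF 2(2)] .
next
  case 3
  have "rep (part_of t) \<in> part k \<longleftrightarrow> t \<in> part k"
    using assms rep_in_V part_of_rep by (auto simp: part_def)
  then show ?thesis
    using 3 finite_part by (simp add: eigvec_def sum_subtractf Int_insert_right)
qed

lemma sum_eigvec:
  assumes "t \<in> V"
  shows "(\<Sum>w\<in>V. eigvec t w) = (if t = root then real (card V) else 0)"
proof (cases t rule: vertex_cases)
  case 1
  then show ?thesis by (simp add: eigvec_def)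
next
  case 2
  have "(\<Sum>w\<in>V. eigvec t w)
      = (\<Sum>w\<in>V. of_bool (part_of w = part_of t)) / card (part (part_of t))
        - (\<Sum>w\<in>V. of_bool (part_of w = root_part)) / card (part root_part)"
    using 2 by (simp add: eigvec_def sum_subtractf sum_divide_distrib)
  also have "\<dots> = 0"
    using finite_V card_part_pos[OF assms] card_part_pos[OF root_in_V]
    by (simp add: V_Int_part_of_eq part_of_root)
  finally show ?thesis using 2(1) by simp
next
  case 3
  then show ?thesis
    using assms rep_in_V finite_V by (simp add: eigvec_def sum_subtractf)
qed

lemma sum_dist_laplacian_mult:
  assumes "u \<in> V"
  shows "(\<Sum>w\<in>V. dist_laplacian V E u w * f w)
    = real (card V + card (part (part_of u))) * f u - (\<Sum>w\<in>V. f w) - (\<Sum>w\<in>part (part_of u). f w)"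
proof -
  have "(\<Sum>w\<in>V. dist_laplacian V E u w * f w) = (\<Sum>w\<in>V.
      of_bool (u = w) * (real (card V + card (part (part_of u))) * f w) - f w
      - of_bool (part_of w = part_of u) * f w)"
    by (rule sum.cong) (auto simp: dist_laplacian_eq assms algebra_simps)
  moreover have "V \<inter> {w. u = w} = {u}" using assms by auto
  ultimately show ?thesis using finite_V by (simp add: sum_subtractf V_Int_part_of_eq)
qed

lemma eigvec_eigen:
  assumes "t \<in> V" and "u \<in> V"
  shows "(\<Sum>w\<in>V. dist_laplacian V E u w * eigvec t w) = eigval t * eigvec t u"
proof -
  note row_sum = sum_dist_laplacian_mult[OF assms(2)] sum_eigvec[OF assms(1)] sum_part_eigvec[OF assms(1)]
  show ?thesis
  proof (cases t rule: vertex_cases)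
    case 1
    then show ?thesis unfolding row_sum by (simp add: eigvec_def eigval_def)
  next
    case 2
    have "part_of t \<noteq> root_part"
      using 2 by metis
    then have "card (part (part_of u)) * eigvec t u
        = of_bool (part_of u = part_of t) - of_bool (part_of u = root_part)"
      using 2 card_part_pos[OF assms(2)] by (auto simp: eigvec_def)
    then show ?thesis
      using 2 by (simp add: row_sum eigval_def algebra_simps)
  next
    case 3
    have "card (part (part_of u)) * eigvec t u = card (part (part_of t)) * eigvec t u"
      using 3 part_of_rep[OF assms(1)] by (auto simp: eigvec_def)
    then show ?thesis
      using 3 by (simp add: row_sum eigval_def algebra_simps)
  qed
qed

lemma dualvec_eigvec:
  assumes "s \<in> V" and "t \<in> V"
  shows "(\<Sum>w\<in>V. dualvec s w * eigvec t w) = of_bool (s = t)"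
proof -
  note sums = sum_eigvec[OF assms(2)] sum_part_eigvec[OF assms(2)]
  have rep_iff: "rep (part_of s) = rep (part_of t) \<longleftrightarrow> part_of s = part_of t"
    using part_of_rep assms by metis
  show ?thesis
  proof (cases s rule: vertex_cases)
    case 1
    have "(\<Sum>w\<in>V. dualvec s w * eigvec t w) = (\<Sum>w\<in>V. eigvec t w) / card V"
      using 1 by (simp add: dualvec_def sum_divide_distrib)
    then show ?thesis
      using 1 finite_V V_nonempty by (simp add: sums)
  next
    case 2
    have "(\<Sum>w\<in>V. dualvec s w * eigvec t w)
        = (\<Sum>w\<in>part (part_of s). eigvec t w) - card (part (part_of s)) / card V * (\<Sum>w\<in>V. eigvec t w)"
      using 2 finite_V
      by (simp add: dualvec_def left_diff_distrib sum_subtractf sum_distrib_left V_Int_part_of_eq)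
    then show ?thesis
      using 2 finite_V V_nonempty rep_iff by (auto simp: sums)
  next
    case 3
    have "(\<Sum>w\<in>V. dualvec s w * eigvec t w)
        = eigvec t s - (\<Sum>w\<in>V. of_bool (part_of w = part_of s) * eigvec t w) / card (part (part_of s))"
      using 3 finite_V assms(1)
      by (simp add: dualvec_def left_diff_distrib sum_subtractf sum_divide_distrib
          sum_of_bool_mult_eq[OF finite_V, of "\<lambda>w. w = s"] Int_insert_right
          del: sum_mult_of_bool_eq sum_of_bool_mult_eq)
    also have "\<dots> = eigvec t s - (\<Sum>w\<in>part (part_of s). eigvec t w) / card (part (part_of s))"
      by (simp only: sum_of_bool_part_of_mult)
    also have "\<dots> = of_bool (s = t)"
      unfolding sum_part_eigvec[OF assms(2)]
      using 3 card_part_pos[OF assms(1)] card_part_pos[OF root_in_V] part_of_rep[OF assms(2)]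
      by (auto simp: eigvec_def part_of_root)
    finally show ?thesis .
  qed
qed

lemma char_poly_dist_laplacian_mat_eq_prod_eigval:
  assumes "bij_betw e {..<card V} V"
  shows "char_poly (dist_laplacian_mat V E e) = (\<Prod>u\<in>V. [:- eigval u, 1:])"
  unfolding dist_laplacian_mat_def
  by (rule char_poly_eq_prod_of_eigenbasis[OF assms eigvec_eigen dualvec_eigvec])

lemma prod_part_eigval:
  assumes "k \<in> part_of ` V"
  shows "(\<Prod>u\<in>part k. [:- eigval u, 1:])
    = [:- (if k = root_part then 0 else real (card V)), 1:]
      * [:- real (card V + card (part k)), 1:] ^ (card (part k) - 1)"
proof -
  have rep: "rep k \<in> part k" "rep (part_of (rep k)) = rep k"
    using assms rep_in_V part_of_rep by (auto simp: part_def)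
  have "rep k = root \<longleftrightarrow> k = root_part"
    using rep part_of_root by (auto simp: part_def)
  then have "[:- eigval (rep k), 1:] = [:- (if k = root_part then 0 else real (card V)), 1:]"
    using rep by (simp add: eigval_def)
  moreover have "[:- eigval u, 1:] = [:- real (card V + card (part k)), 1:]" if "u \<in> part k - {rep k}" for u
    using that part_of_root by (auto simp: eigval_def part_def)
  ultimately show ?thesis
    using rep finite_part by (simp add: prod.remove[of _ "rep k"] card_Diff_singleton)
qed

lemma prod_eigval:
  "(\<Prod>u\<in>V. [:- eigval u, 1:])
    = [:0, 1:] * [:- real (card V), 1:] ^ (card (part_of ` V) - 1)
      * (\<Prod>k\<in>part_of ` V. [:- real (card V + card (part k)), 1:] ^ (card (part k) - 1))"
proof -
  have root_part_in: "root_part \<in> part_of ` V"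
    using root_in_V part_of_root by force
  have "(\<Prod>u\<in>V. [:- eigval u, 1:]) = (\<Prod>k\<in>part_of ` V. \<Prod>u\<in>part k. [:- eigval u, 1:])"
    unfolding part_def using finite_V by (rule prod.image_gen)
  also have "\<dots> = (\<Prod>k\<in>part_of ` V. [:- (if k = root_part then 0 else real (card V)), 1:]
      * [:- real (card V + card (part k)), 1:] ^ (card (part k) - 1))"
    by (rule prod.cong[OF refl prod_part_eigval])
  also have "\<dots> = (\<Prod>k\<in>part_of ` V. [:- (if k = root_part then 0 else real (card V)), 1:])
      * (\<Prod>k\<in>part_of ` V. [:- real (card V + card (part k)), 1:] ^ (card (part k) - 1))"
    by (rule prod.distrib)
  also have "(\<Prod>k\<in>part_of ` V. [:- (if k = root_part then 0 else real (card V)), 1:])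
      = [:0, 1:] * [:- real (card V), 1:] ^ (card (part_of ` V) - 1)"
    using root_part_in finite_V by (simp add: prod.remove[of _ root_part] card_Diff_singleton)
  finally show ?thesis .
qed

theorem char_poly_dist_laplacian_mat:
  assumes "bij_betw e {..<card V} V"
  shows "char_poly (dist_laplacian_mat V E e)
    = [:0, 1:] * [:- real (card V), 1:] ^ (card (part_of ` V) - 1)
      * (\<Prod>k\<in>part_of ` V. [:- real (card V + card (part k)), 1:] ^ (card (part k) - 1))"
  unfolding char_poly_dist_laplacian_mat_eq_prod_eigval[OF assms] prod_eigval ..

end

section \<open>The metacyclic group\<close>

lemma card_even_less_double: "card {j :: nat. j < 2 * n \<and> even j} = n"
proof -
  have "{j. j < 2 * n \<and> even j} = (\<lambda>t. 2 * t) ` {..<n}"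
    by (auto elim!: evenE)
  then show ?thesis by (simp add: card_image inj_on_def)
qed

lemma card_odd_less_double: "card {j :: nat. j < 2 * n \<and> odd j} = n"
proof -
  have "{j. j < 2 * n \<and> odd j} = (\<lambda>t. 2 * t + 1) ` {..<n}"
    by (auto elim!: oddE)
  then show ?thesis by (simp add: card_image inj_on_def)
qed

lemma (in monoid) nat_pow_eq_pow_mod:
  fixes i q :: nat
  assumes "x \<in> carrier G" and "x [^] q = \<one>"
  shows "x [^] i = x [^] (i mod q)"
proof -
  have "x [^] i = x [^] (q * (i div q) + i mod q)"
    by simp
  also have "\<dots> = (x [^] q) [^] (i div q) \<otimes> x [^] (i mod q)"
    using assms(1) by (simp add: nat_pow_mult nat_pow_pow)
  finally show ?thesis using assms by simp
qed

lemma mod_eq_iff_odd_parts_eq: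
  fixes m i j k l :: nat
  assumes "odd m" and "i < m" and "k < m"
  shows "(int i + int k * (-1) ^ j) mod int m = (int k + int i * (-1) ^ l) mod int m
    \<longleftrightarrow> (if odd l then i else 0) = (if odd j then k else 0)"
proof -
  define x where "x = int (if odd l then i else 0)"
  define y where "y = int (if odd j then k else 0)"
  have "(int i + int k * (-1) ^ j) - (int k + int i * (-1) ^ l) = 2 * (x - y)"
    by (cases "even j"; cases "even l") (simp_all add: x_def y_def algebra_simps)
  then have "(int i + int k * (-1) ^ j) mod int m = (int k + int i * (-1) ^ l) mod int m
      \<longleftrightarrow> int m dvd 2 * (x - y)"
    by (simp add: mod_eq_dvd_iff)
  also have "\<dots> \<longleftrightarrow> int m dvd (x - y)"
  proof -
    have "coprime (int m) 2" using assms(1) by (simp add: coprime_commute)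
    then show ?thesis by (rule coprime_dvd_mult_right_iff)
  qed
  also have "\<dots> \<longleftrightarrow> x = y"
  proof
    assume dvd: "int m dvd (x - y)"
    have "\<bar>x - y\<bar> < int m"
      using assms(2,3) by (auto simp: x_def y_def)
    then show "x = y"
      using dvd_imp_le_int[OF _ dvd] by fastforce
  qed simp
  finally show ?thesis by (simp add: x_def y_def)
qed

lemma int_add_mult_pred_pow_mod:
  fixes m i j k :: nat
  assumes "0 < m"
  shows "int (i + k * (m - 1) ^ j) mod int m = (int i + int k * (-1) ^ j) mod int m"
proof -
  have "(int m - 1) mod int m = (-1) mod int m"
    by (simp add: mod_eq_dvd_iff)
  then have "(int m - 1) ^ j mod int m = (-1) ^ j mod int m"
    by (metis power_mod)
  then have "(int i + int k * (int m - 1) ^ j) mod int m = (int i + int k * (-1) ^ j) mod int m"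
    by (intro mod_add_cong mod_mult_cong refl)
  then show ?thesis
    using assms by (simp add: of_nat_diff)
qed

locale metacyclic_group = group G for G (structure) +
  fixes a b :: 'g and m n :: nat
  assumes odd_m: "odd m" and m_gt_2: "2 < m" and n_pos: "1 \<le> n"
    and a_closed: "a \<in> carrier G" and b_closed: "b \<in> carrier G"
    and a_pow_m: "a [^] m = \<one>" and b_pow_2n: "b [^] (2 * n) = \<one>"
    and b_conj_a: "b \<otimes> a \<otimes> inv b = inv a"
    and generate_a_b: "generate G {a, b} = carrier G"
    and card_carrier: "card (carrier G) = 2 * m * n"
begin

definition ab :: "nat \<Rightarrow> nat \<Rightarrow> 'g" where
  "ab i j = a [^] i \<otimes> b [^] j"

lemma ab_closed [simp]: "ab i j \<in> carrier G"
  by (simp add: ab_def a_closed b_closed)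

lemma ab_0_0: "ab 0 0 = \<one>" and ab_1_0: "ab 1 0 = a" and ab_0_1: "ab 0 1 = b"
  by (simp_all add: ab_def a_closed b_closed)

lemma inv_a_eq: "inv a = a [^] (m - 1)"
proof (rule inv_equality)
  have "a [^] (m - 1) \<otimes> a = a [^] Suc (m - 1)" by (simp only: nat_pow_Suc)
  then show "a [^] (m - 1) \<otimes> a = \<one>"
    using m_gt_2 a_pow_m by simp
qed (simp_all add: a_closed)

lemma b_mult_a: "b \<otimes> a = a [^] (m - 1) \<otimes> b"
proof -
  have "b \<otimes> a = (b \<otimes> a \<otimes> inv b) \<otimes> b"
    using a_closed b_closed by (simp add: m_assoc)
  then show ?thesis
    using b_conj_a inv_a_eq by simp
qed

lemma b_mult_a_pow: "b \<otimes> a [^] k = a [^] (k * (m - 1)) \<otimes> b"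
proof (induction k)
  case 0
  then show ?case using b_closed by simp
next
  case (Suc k)
  have "b \<otimes> a [^] Suc k = a [^] (k * (m - 1)) \<otimes> (b \<otimes> a)"
    using Suc a_closed b_closed by (simp flip: m_assoc)
  also have "\<dots> = a [^] (Suc k * (m - 1)) \<otimes> b"
    using a_closed b_closed by (simp add: b_mult_a nat_pow_mult add.commute flip: m_assoc)
  finally show ?case .
qed

lemma b_pow_mult_a_pow: "b [^] j \<otimes> a [^] k = a [^] (k * (m - 1) ^ j) \<otimes> b [^] j"
proof (induction j arbitrary: k)
  case 0
  then show ?case using a_closed by simp
next
  case (Suc j)
  have "b [^] Suc j \<otimes> a [^] k = b [^] j \<otimes> a [^] (k * (m - 1)) \<otimes> b"
    using a_closed b_closed by (simp add: m_assoc nat_pow_Suc2 b_mult_a_pow)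
  also have "\<dots> = a [^] (k * (m - 1) ^ Suc j) \<otimes> b [^] Suc j"
    using Suc a_closed b_closed by (simp add: m_assoc mult.assoc mult.commute[of "m - 1"])
  finally show ?case .
qed

lemma ab_mult: "ab i j \<otimes> ab k l = ab (i + k * (m - 1) ^ j) (j + l)"
proof -
  have "ab i j \<otimes> ab k l = a [^] i \<otimes> (b [^] j \<otimes> a [^] k) \<otimes> b [^] l"
    using a_closed b_closed by (simp add: ab_def m_assoc)
  also have "\<dots> = (a [^] i \<otimes> a [^] (k * (m - 1) ^ j)) \<otimes> (b [^] j \<otimes> b [^] l)"
    using a_closed b_closed by (simp add: b_pow_mult_a_pow m_assoc)
  also have "\<dots> = ab (i + k * (m - 1) ^ j) (j + l)"
    using a_closed b_closed by (simp add: ab_def nat_pow_mult)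
  finally show ?thesis .
qed

lemma ab_mod: "ab i j = ab (i mod m) (j mod (2 * n))"
  using nat_pow_eq_pow_mod[OF a_closed a_pow_m] nat_pow_eq_pow_mod[OF b_closed b_pow_2n]
  by (simp add: ab_def)

definition exps :: "(nat \<times> nat) set" where
  "exps = {..<m} \<times> {..<2 * n}"

lemma finite_exps: "finite exps"
  by (simp add: exps_def)

lemma ab_in_image_exps: "ab i j \<in> case_prod ab ` exps"
proof -
  have "(i mod m, j mod (2 * n)) \<in> exps"
    using m_gt_2 n_pos by (simp add: exps_def)
  then have "case_prod ab (i mod m, j mod (2 * n)) \<in> case_prod ab ` exps"
    by (rule imageI)
  then show ?thesis
    using ab_mod[of i j] by simp
qed

lemma carrier_eq_image_ab: "carrier G = case_prod ab ` exps"
proof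
  show "carrier G \<subseteq> case_prod ab ` exps"
  proof
    fix x assume "x \<in> carrier G"
    then have "x \<in> generate G {a, b}" by (simp add: generate_a_b)
    then show "x \<in> case_prod ab ` exps"
    proof (induction rule: generate.induct)
      case one
      then show ?case using ab_in_image_exps[of 0 0] by (simp add: ab_0_0)
    next
      case (incl h)
      then have "h = ab 1 0 \<or> h = ab 0 1"
        using ab_1_0 ab_0_1 by (metis empty_iff insertE)
      then show ?case using ab_in_image_exps by blast
    next
      case (inv h)
      have "inv b = b [^] (2 * n - 1)"
        using b_closed b_pow_2n n_pos by (intro inv_equality) (simp_all flip: nat_pow_Suc)
      then have "inv h = ab (m - 1) 0 \<or> inv h = ab 0 (2 * n - 1)"
        using inv a_closed b_closed inv_a_eq by (auto simp: ab_def)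
      then show ?case using ab_in_image_exps by metis
    next
      case (eng h1 h2)
      then show ?case using ab_mult ab_in_image_exps by auto
    qed
  qed
qed auto

lemma inj_on_ab: "inj_on (case_prod ab) exps"
proof (rule eq_card_imp_inj_on[OF finite_exps])
  show "card (case_prod ab ` exps) = card exps"
    unfolding carrier_eq_image_ab[symmetric] card_carrier by (simp add: exps_def card_cartesian_product)
qed

lemma ab_eq_ab_iff: "ab i j = ab k l \<longleftrightarrow> i mod m = k mod m \<and> j mod (2 * n) = l mod (2 * n)"
proof -
  have "(i mod m, j mod (2 * n)) \<in> exps" "(k mod m, l mod (2 * n)) \<in> exps"
    using m_gt_2 n_pos by (auto simp: exps_def)
  then have "case_prod ab (i mod m, j mod (2 * n)) = case_prod ab (k mod m, l mod (2 * n))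
      \<longleftrightarrow> (i mod m, j mod (2 * n)) = (k mod m, l mod (2 * n))"
    by (intro inj_on_eq_iff[OF inj_on_ab])
  then show ?thesis
    by (simp flip: ab_mod)
qed

lemma ab_commute_iff:
  assumes "i < m" and "k < m"
  shows "ab i j \<otimes> ab k l = ab k l \<otimes> ab i j
    \<longleftrightarrow> (if odd l then i else 0) = (if odd j then k else 0)"
proof -
  have m_pos: "0 < m"
    using m_gt_2 by simp
  have "ab i j \<otimes> ab k l = ab k l \<otimes> ab i j
      \<longleftrightarrow> (i + k * (m - 1) ^ j) mod m = (k + i * (m - 1) ^ l) mod m"
    by (simp add: ab_mult ab_eq_ab_iff add.commute)
  also have "\<dots> \<longleftrightarrow> int (i + k * (m - 1) ^ j) mod int m = int (k + i * (m - 1) ^ l) mod int m"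
    by (metis of_nat_eq_iff zmod_int)
  also have "\<dots> \<longleftrightarrow> (int i + int k * (-1) ^ j) mod int m = (int k + int i * (-1) ^ l) mod int m"
    by (simp only: int_add_mult_pred_pow_mod[OF m_pos])
  also have "\<dots> \<longleftrightarrow> (if odd l then i else 0) = (if odd j then k else 0)"
    by (rule mod_eq_iff_odd_parts_eq[OF odd_m assms])
  finally show ?thesis .
qed

lemma ab_in_centre_iff:
  assumes "(i, j) \<in> exps"
  shows "ab i j \<in> group_centre G \<longleftrightarrow> i = 0 \<and> even j"
proof
  have i: "i < m" using assms by (simp add: exps_def)
  assume "ab i j \<in> group_centre G"
  then have "ab i j \<otimes> ab 1 0 = ab 1 0 \<otimes> ab i j" and "ab i j \<otimes> ab 0 1 = ab 0 1 \<otimes> ab i j"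
    by (simp_all add: group_centre_def)
  then show "i = 0 \<and> even j"
    using ab_commute_iff[OF i, of 1 j 0] ab_commute_iff[OF i, of 0 j 1] m_gt_2
    by (auto split: if_splits)
next
  assume "i = 0 \<and> even j"
  then have "ab i j \<otimes> ab k l = ab k l \<otimes> ab i j" if "(k, l) \<in> exps" for k l
    using that m_gt_2 by (subst ab_commute_iff) (auto simp: exps_def)
  then have "\<forall>g\<in>carrier G. ab i j \<otimes> g = g \<otimes> ab i j"
    unfolding carrier_eq_image_ab by fastforce
  then show "ab i j \<in> group_centre G"
    by (simp add: group_centre_def)
qed

definition noncentral_exps :: "(nat \<times> nat) set" where
  "noncentral_exps = {(i, j) \<in> exps. i \<noteq> 0 \<or> odd j}"

definition exp_part :: "nat \<times> nat \<Rightarrow> nat option" where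
  "exp_part = (\<lambda>(i, j). if odd j then Some i else None)"

lemma noncentral_exps_subset: "noncentral_exps \<subseteq> exps"
  by (auto simp: noncentral_exps_def)

lemma nc_vertices_eq_image_ab: "nc_vertices G = case_prod ab ` noncentral_exps"
proof -
  have "nc_vertices G = case_prod ab ` exps - group_centre G"
    by (simp add: nc_vertices_def flip: carrier_eq_image_ab)
  also have "\<dots> = case_prod ab ` noncentral_exps"
    using ab_in_centre_iff by (auto simp: noncentral_exps_def)
  finally show ?thesis .
qed

lemma ab_commute_iff_exp_part_eq:
  assumes "x \<in> noncentral_exps" and "y \<in> noncentral_exps"
  shows "case_prod ab x \<otimes> case_prod ab y = case_prod ab y \<otimes> case_prod ab x
    \<longleftrightarrow> exp_part x = exp_part y"
proof -
  obtain i j k l where "x = (i, j)" "y = (k, l)" by fastforce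
  moreover have "i < m" "k < m" "i \<noteq> 0 \<or> odd j" "k \<noteq> 0 \<or> odd l"
    using assms calculation by (auto simp: noncentral_exps_def exps_def)
  ultimately show ?thesis
    by (auto simp: ab_commute_iff exp_part_def)
qed

definition elem_part :: "'g \<Rightarrow> nat option" where
  "elem_part g = exp_part (the_inv_into exps (case_prod ab) g)"

lemma elem_part_ab: "x \<in> exps \<Longrightarrow> elem_part (case_prod ab x) = exp_part x"
  by (simp add: elem_part_def the_inv_into_f_f[OF inj_on_ab])

lemma nc_adj_iff_elem_part:
  "nc_adj G u v \<longleftrightarrow> u \<in> nc_vertices G \<and> v \<in> nc_vertices G \<and> elem_part u \<noteq> elem_part v"
proof (cases "u \<in> nc_vertices G \<and> v \<in> nc_vertices G")
  case True
  then obtain x y where "x \<in> noncentral_exps" "y \<in> noncentral_exps"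
    and "u = case_prod ab x" "v = case_prod ab y"
    by (auto simp: nc_vertices_eq_image_ab)
  then have "elem_part u = exp_part x" "elem_part v = exp_part y"
    and "u \<otimes> v = v \<otimes> u \<longleftrightarrow> exp_part x = exp_part y"
    using elem_part_ab[of x] elem_part_ab[of y] ab_commute_iff_exp_part_eq[of x y] noncentral_exps_subset
    by auto
  then show ?thesis
    using True by (auto simp: nc_adj_def)
qed (auto simp: nc_adj_def)

lemma finite_nc_vertices: "finite (nc_vertices G)"
  using finite_subset[OF noncentral_exps_subset finite_exps] by (simp add: nc_vertices_eq_image_ab)

lemma card_elem_part_fibre:
  "card {u \<in> nc_vertices G. elem_part u = k} = card {x \<in> noncentral_exps. exp_part x = k}"
proof -
  have inj: "inj_on (case_prod ab) noncentral_exps"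
    using inj_on_subset[OF inj_on_ab noncentral_exps_subset] .
  have "{u \<in> nc_vertices G. elem_part u = k}
      = case_prod ab ` {x \<in> noncentral_exps. elem_part (case_prod ab x) = k}"
    unfolding nc_vertices_eq_image_ab by blast
  also have "{x \<in> noncentral_exps. elem_part (case_prod ab x) = k} = {x \<in> noncentral_exps. exp_part x = k}"
    by (intro Collect_cong conj_cong refl) (simp add: elem_part_ab subsetD[OF noncentral_exps_subset])
  finally have "{u \<in> nc_vertices G. elem_part u = k}
      = case_prod ab ` {x \<in> noncentral_exps. exp_part x = k}" .
  then show ?thesis
    using inj by (simp add: card_image inj_on_subset[of _ noncentral_exps])
qed

lemma card_nc_vertices: "card (nc_vertices G) = card noncentral_exps"
  using inj_on_subset[OF inj_on_ab noncentral_exps_subset] by (simp add: nc_vertices_eq_image_ab card_image)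

lemma elem_part_image: "elem_part ` nc_vertices G = exp_part ` noncentral_exps"
  using elem_part_ab noncentral_exps_subset by (force simp: nc_vertices_eq_image_ab image_image)

lemma noncentral_exps_eq:
  "noncentral_exps = {1..<m} \<times> {j. j < 2 * n \<and> even j} \<union> {..<m} \<times> {j. j < 2 * n \<and> odd j}"
  by (auto simp: noncentral_exps_def exps_def)

lemma exp_part_fibre_None:
  "{x \<in> noncentral_exps. exp_part x = None} = {1..<m} \<times> {j. j < 2 * n \<and> even j}"
  by (auto simp: noncentral_exps_eq exp_part_def)

lemma exp_part_fibre_Some:
  "i < m \<Longrightarrow> {x \<in> noncentral_exps. exp_part x = Some i} = {i} \<times> {j. j < 2 * n \<and> odd j}"
  by (auto simp: noncentral_exps_eq exp_part_def split: if_splits)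

lemma exp_part_image: "exp_part ` noncentral_exps = insert None (Some ` {..<m})"
proof -
  have "None \<in> exp_part ` noncentral_exps"
    by (rule rev_image_eqI[of "(1, 0)"])
      (use m_gt_2 n_pos in \<open>auto simp: noncentral_exps_def exps_def exp_part_def\<close>)
  moreover have "Some i \<in> exp_part ` noncentral_exps" if "i < m" for i
    by (rule rev_image_eqI[of "(i, 1)"])
      (use that n_pos in \<open>auto simp: noncentral_exps_def exps_def exp_part_def\<close>)
  ultimately have "insert None (Some ` {..<m}) \<subseteq> exp_part ` noncentral_exps"
    by blast
  moreover have "exp_part ` noncentral_exps \<subseteq> insert None (Some ` {..<m})"
    by (auto simp: noncentral_exps_def exps_def exp_part_def split: if_splits)
  ultimately show ?thesis by blast
qed

lemma card_noncentral_exps: "card noncentral_exps = n * (2 * m - 1)"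
proof -
  have "card noncentral_exps = (m - 1) * n + m * n"
    unfolding noncentral_exps_eq
    by (subst card_Un_disjoint)
      (auto simp: card_cartesian_product card_even_less_double card_odd_less_double)
  also have "\<dots> = n * (2 * m - 1)"
    using m_gt_2 by (simp add: algebra_simps diff_mult_distrib2)
  finally show ?thesis .
qed

theorem char_poly_nc_dist_laplacian_mat:
  assumes "bij_betw e {..<card (nc_vertices G)} (nc_vertices G)"
  shows "char_poly (dist_laplacian_mat (nc_vertices G) (nc_adj G) e) =
           [:0, 1:]
         * [:- real (n * (2 * m - 1)), 1:] ^ m
         * [:- real (2 * m * n), 1:] ^ (m * (n - 1))
         * [:- real ((3 * m - 2) * n), 1:] ^ ((m - 1) * n - 1)"
proof -
  have parts: "elem_part ` nc_vertices G = insert None (Some ` {..<m})"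
    by (simp add: elem_part_image exp_part_image)
  interpret nc: complete_multipartite "nc_vertices G" elem_part "nc_adj G"
  proof
    show "2 \<le> card (elem_part ` nc_vertices G)"
      using m_gt_2 by (simp add: parts card_image)
  qed (simp_all add: finite_nc_vertices nc_adj_iff_elem_part)
  have card_V: "card (nc_vertices G) = n * (2 * m - 1)"
    by (simp add: card_nc_vertices card_noncentral_exps)
  have card_None: "card (nc.part None) = (m - 1) * n"
    by (simp add: nc.part_def card_elem_part_fibre exp_part_fibre_None card_cartesian_product
        card_even_less_double)
  have card_Some: "card (nc.part (Some i)) = n" if "i < m" for i
    using that by (simp add: nc.part_def card_elem_part_fibre exp_part_fibre_Some card_cartesian_product
        card_odd_less_double)
  have sum_None: "n * (2 * m - 1) + (m - 1) * n = (3 * m - 2) * n"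
    and sum_Some: "n * (2 * m - 1) + n = 2 * m * n"
    using m_gt_2 by (simp_all add: algebra_simps diff_mult_distrib diff_mult_distrib2)
  define F where
    "F k = [:- real (card (nc_vertices G) + card (nc.part k)), 1:] ^ (card (nc.part k) - 1)" for k
  have "prod F (elem_part ` nc_vertices G) = F None * prod F (Some ` {..<m})"
    unfolding parts by (rule prod.insert) auto
  also have "prod F (Some ` {..<m}) = (\<Prod>i<m. F (Some i))"
    by (simp add: prod.reindex)
  also have "\<dots> = (\<Prod>i<m. [:- real (2 * m * n), 1:] ^ (n - 1))"
    by (rule prod.cong) (simp_all only: F_def card_V card_Some sum_Some lessThan_iff)
  also have "F None = [:- real ((3 * m - 2) * n), 1:] ^ ((m - 1) * n - 1)"
    by (simp only: F_def card_V card_None sum_None)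
  finally have "prod F (elem_part ` nc_vertices G)
      = [:- real ((3 * m - 2) * n), 1:] ^ ((m - 1) * n - 1) * [:- real (2 * m * n), 1:] ^ (m * (n - 1))"
    by (simp only: prod_constant card_lessThan power_mult mult.commute[of m])
  moreover have "card (elem_part ` nc_vertices G) - 1 = m"
    by (simp add: parts card_image)
  ultimately show ?thesis
    unfolding nc.char_poly_dist_laplacian_mat[OF assms] F_def[symmetric]
    by (simp only: card_V mult_ac)
qed

end

theorem theorem6p3:
  fixes G :: "('g, 'b) monoid_scheme" and a b :: 'g and m n :: nat
    and e :: "nat \<Rightarrow> 'g"
  assumes "group G"
    and "odd m" and "m > 2" and "n \<ge> 1"
    and "a \<in> carrier G" and "b \<in> carrier G"
    and "a [^]\<^bsub>G\<^esub> m = \<one>\<^bsub>G\<^esub>" and "b [^]\<^bsub>G\<^esub> (2 * n) = \<one>\<^bsub>G\<^esub>"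
    and "b \<otimes>\<^bsub>G\<^esub> a \<otimes>\<^bsub>G\<^esub> inv\<^bsub>G\<^esub> b = inv\<^bsub>G\<^esub> a"
    and "generate G {a, b} = carrier G"
    and "finite (carrier G)" and "card (carrier G) = 2 * m * n"
    and "bij_betw e {..<card (nc_vertices G)} (nc_vertices G)"
  shows "char_poly (dist_laplacian_mat (nc_vertices G) (nc_adj G) e) =
           [:0, 1:]
         * [:- real (n * (2 * m - 1)), 1:] ^ m
         * [:- real (2 * m * n), 1:] ^ (m * (n - 1))
         * [:- real ((3 * m - 2) * n), 1:] ^ ((m - 1) * n - 1)"
proof -
  \<comment> \<open>finiteness of the carrier is implied by its cardinality \<open>2 m n > 0\<close>\<close>
  interpret metacyclic_group G a b m n
    by (intro metacyclic_group.intro metacyclic_group_axioms.intro assms(1-10,12))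
  show ?thesis
    using assms(13) by (rule char_poly_nc_dist_laplacian_mat)
qed

end
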